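(* Let $m\ge 1$ be an integer and, for integers $n\ge 1$, let $T(m,n)$ be the number of domino tilings of an $m$-by-$n$ rectangle (equivalently, the number of perfect matchings of the $m$-by-$n$ grid graph), with $T(m,0)=1$. Then the sequence $(T(m,n))_{n\ge 1}$ satisfies a linear recurrence $\sum_{k=0}^{d} b_k\,T(m,n+k)=0$ (for all $n\ge 1$) with constant coefficients, $b_0\neq 0$ and $b_d\neq 0$. Extending the sequence to all integers $n$ by running any such recurrence (with $b_0\ne 0$) backwards gives a doubly-infinite sequence $(T(m,n))_{n\in\mathbb Z}$ that does not depend on which such recurrence is used, agrees with $T(m,0)=1$, and satisfies $$T(m,-2-n)=\epsilon_{m,n}\,T(m,n)\quad\text{for all } n\in\mathbb Z,$$ where $\epsilon_{m,n}=-1$ if $m\equiv 2 \pmod 4$ and $n$ is odd, and $\epsilon_{m,n}=+1$ otherwise.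
   Context: A domino tiling of an $m$-by-$n$ rectangle is a covering of it by $1$-by-$2$ and $2$-by-$1$ rectangles with pairwise disjoint interiors. The $m$-by-$n$ grid graph has vertices $(i,j)$, $1\le i\le m$ (rows), $1\le j\le n$ (columns), with edges between $(i,j),(i,j+1)$ (horizontal) and between $(i,j),(i+1,j)$ (vertical). *)

theory Defs
  imports Complex_Main
begin

definition grid_cells :: "nat \<Rightarrow> nat \<Rightarrow> (nat \<times> nat) set" where
  "grid_cells m n = {(i, j). 1 \<le> i \<and> i \<le> m \<and> 1 \<le> j \<and> j \<le> n}"

definition grid_adj :: "nat \<times> nat \<Rightarrow> nat \<times> nat \<Rightarrow> bool" where
  "grid_adj p q \<longleftrightarrow>
     (fst p = fst q \<and> (snd q = snd p + 1 \<or> snd p = snd q + 1)) \<or>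
     (snd p = snd q \<and> (fst q = fst p + 1 \<or> fst p = fst q + 1))"

definition grid_edges :: "nat \<Rightarrow> nat \<Rightarrow> (nat \<times> nat) set set" where
  "grid_edges m n = {{p, q} | p q. p \<in> grid_cells m n \<and> q \<in> grid_cells m n \<and> grid_adj p q}"

definition grid_perfect_matching :: "nat \<Rightarrow> nat \<Rightarrow> (nat \<times> nat) set set \<Rightarrow> bool" where
  "grid_perfect_matching m n M \<longleftrightarrow>
     M \<subseteq> grid_edges m n \<and> (\<forall>v \<in> grid_cells m n. \<exists>!e. e \<in> M \<and> v \<in> e)"

text \<open>T(m,n); note T(m,0) = 1 (the empty matching of the empty graph).\<close>
definition domino_T :: "nat \<Rightarrow> nat \<Rightarrow> nat" where
  "domino_T m n = card {M. grid_perfect_matching m n M}"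

definition eps_sign :: "nat \<Rightarrow> int \<Rightarrow> int" where
  "eps_sign m n = (if m mod 4 = 2 \<and> odd n then -1 else 1)"

end

theory Submission
  imports Defs "Jordan_Normal_Form.Determinant"
begin

text \<open>Reading the board column by column, \<open>T(m,n)\<close> is the \<open>(\<emptyset>,\<emptyset>)\<close> entry of \<open>A\<^sup>n\<close>, where the
  transfer matrix \<open>A\<close> is indexed by the sets of rows in which horizontal dominoes cross from one
  column to the next, and \<open>A(S,T)\<close> counts the vertical tilings of the rest of the column when
  \<open>S \<inter> T = \<emptyset>\<close> (and is 0 otherwise). \<open>A\<close> is invertible over \<open>\<int>\<close>: its inverse \<open>B\<close> has
  \<open>B(S,T) = (-1)\<^bsup>|S \<inter> T|/2\<^esup>\<close> times the number of vertical tilings of \<open>S \<inter> T\<close> when \<open>S \<union> T\<close> is all rows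
  (and 0 otherwise), by a sign-reversing cancellation. Passing to complementary row sets, \<open>B\<close> is
  \<open>A\<close> up to signs, so \<open>B\<^sup>n(\<emptyset>,\<emptyset>) = \<plusminus>A\<^sup>n(all,all) = \<plusminus>A\<^bsup>n-2\<^esup>(\<emptyset>,\<emptyset>)\<close>, with the sign \<open>\<epsilon>\<^sub>m\<^sub>,\<^sub>n\<^sub>-\<^sub>2\<close>
  by a parity count. The sequence \<open>n \<mapsto> A\<^sup>n(\<emptyset>,\<emptyset>)\<close>, \<open>n \<in> \<int>\<close>, satisfies the recurrence given by a
  linear dependence among the vectors \<open>A\<^sup>k e\<^sub>\<emptyset>\<close>, and any recurrence with nonzero constant term
  that holds on a tail of a two-sided sequence satisfying such a recurrence holds everywhere.\<close>

section \<open>Tilings of a column by vertical dominoes\<close>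

definition column_tilings :: "nat set \<Rightarrow> nat set set set" where
  "column_tilings Y = {P. (\<forall>e\<in>P. \<exists>i. e = {i, Suc i}) \<and> \<Union>P = Y \<and> pairwise disjnt P}"

lemma column_tilings_iff:
  "P \<in> column_tilings Y \<longleftrightarrow>
    (\<forall>e\<in>P. \<exists>i. e = {i, Suc i}) \<and> \<Union>P = Y \<and> (\<forall>e\<in>P. \<forall>e'\<in>P. e \<noteq> e' \<longrightarrow> e \<inter> e' = {})"
  unfolding column_tilings_def pairwise_def disjnt_def by blast

lemma column_tilings_empty [simp]: "column_tilings {} = {{}}"
  unfolding column_tilings_def by auto

lemma column_tilings_subset_Pow: "column_tilings Y \<subseteq> Pow (Pow Y)"
  unfolding column_tilings_def by auto

lemma finite_column_tilings: "finite Y \<Longrightarrow> finite (column_tilings Y)"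
  using column_tilings_subset_Pow by (rule finite_subset) simp

lemma finite_column_tiling:
  assumes "P \<in> column_tilings Y" "finite Y"
  shows "finite P"
proof (rule finite_subset)
  show "P \<subseteq> Pow Y"
    using assms(1) column_tilings_subset_Pow by blast
qed (use assms(2) in simp)

lemma card_column_tiling:
  assumes "P \<in> column_tilings Y" "finite Y"
  shows "card Y = 2 * card P"
proof -
  have P: "\<forall>e\<in>P. \<exists>i. e = {i, Suc i}" "\<Union>P = Y" "pairwise disjnt P"
    using assms(1) unfolding column_tilings_def by auto
  have "\<And>e. e \<in> P \<Longrightarrow> finite e"
    using P(1) by auto
  then have "card Y = (\<Sum>e\<in>P. card e)"
    using card_Union_disjoint[OF P(3)] P(2) by simp
  also have "\<dots> = (\<Sum>e\<in>P. 2)"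
    using P(1) by (intro sum.cong) auto
  finally show ?thesis by simp
qed

lemma even_card_if_column_tilings_nonempty:
  assumes "column_tilings Y \<noteq> {}" "finite Y"
  shows "even (card Y)"
proof -
  obtain P where "P \<in> column_tilings Y"
    using assms(1) by blast
  then show ?thesis
    using card_column_tiling assms(2) by simp
qed

lemma column_tilings_Un:
  assumes P: "P \<in> column_tilings X" and Q: "Q \<in> column_tilings Y" and XY: "X \<inter> Y = {}"
  shows "P \<union> Q \<in> column_tilings (X \<union> Y)"
proof -
  have P': "\<forall>e\<in>P. \<exists>i. e = {i, Suc i}" "\<Union>P = X" "pairwise disjnt P"
    using P unfolding column_tilings_def by auto
  have Q': "\<forall>e\<in>Q. \<exists>i. e = {i, Suc i}" "\<Union>Q = Y" "pairwise disjnt Q"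
    using Q unfolding column_tilings_def by auto
  have cross: "disjnt p q \<and> disjnt q p" if "p \<in> P" "q \<in> Q" for p q
    using that P'(2) Q'(2) XY unfolding disjnt_def by blast
  have "pairwise disjnt (P \<union> Q)"
  proof (rule pairwiseI)
    fix p q assume "p \<in> P \<union> Q" "q \<in> P \<union> Q" "p \<noteq> q"
    then show "disjnt p q"
      using pairwiseD[OF P'(3)] pairwiseD[OF Q'(3)] cross by blast
  qed
  with P'(1,2) Q'(1,2) show ?thesis
    unfolding column_tilings_def by auto
qed

lemma column_tilings_subset:
  assumes "R \<in> column_tilings Y" "P \<subseteq> R"
  shows "P \<in> column_tilings (\<Union>P)" and "R - P \<in> column_tilings (Y - \<Union>P)"
proof -
  have R: "\<forall>e\<in>R. \<exists>i. e = {i, Suc i}" "\<Union>R = Y" "pairwise disjnt R"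
    using assms(1) unfolding column_tilings_def by auto
  have "pairwise disjnt P"
    using R(3) assms(2) by (rule pairwise_subset)
  with R(1) assms(2) show "P \<in> column_tilings (\<Union>P)"
    unfolding column_tilings_def by auto
  have "x \<notin> \<Union>P" if "e \<in> R - P" "x \<in> e" for e x
  proof
    assume "x \<in> \<Union>P"
    then obtain e' where "e' \<in> P" "x \<in> e'" by blast
    with that assms(2) have "\<not> disjnt e e'"
      unfolding disjnt_def by auto
    moreover have "e \<noteq> e'"
      using that \<open>e' \<in> P\<close> by blast
    ultimately show False
      using pairwiseD[OF R(3)] \<open>e' \<in> P\<close> that assms(2) by blast
  qed
  with R(2) have "\<Union>(R - P) = Y - \<Union>P"
    by auto
  moreover have "pairwise disjnt (R - P)"
    using R(3) by (rule pairwise_subset) auto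
  ultimately show "R - P \<in> column_tilings (Y - \<Union>P)"
    using R(1) unfolding column_tilings_def by auto
qed

lemma column_tilings_decompose:
  "bij_betw (\<lambda>(R, P). (\<Union>P, R - P, P)) (SIGMA R:column_tilings D. Pow R)
     (SIGMA X:Pow D. column_tilings (D - X) \<times> column_tilings X)"
  (is "bij_betw ?split ?A ?B")
proof (rule bij_betwI[where g = "\<lambda>(X, Q, P). (Q \<union> P, P)"])
  show "?split \<in> ?A \<rightarrow> ?B"
    using column_tilings_subset column_tilings_subset_Pow by fastforce
  have join: "\<Union>P = X \<and> Q \<union> P - P = Q \<and> Q \<union> P \<in> column_tilings D"
    if X: "X \<subseteq> D" and Q: "Q \<in> column_tilings (D - X)" and P: "P \<in> column_tilings X" for X Q P
  proof (intro conjI)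
    show "\<Union>P = X"
      using P unfolding column_tilings_def by blast
    have "Q \<inter> P = {}"
      using Q P unfolding column_tilings_def by fastforce
    then show "Q \<union> P - P = Q"
      by blast
    have "Q \<union> P \<in> column_tilings (D - X \<union> X)"
      using column_tilings_Un[OF Q P] by blast
    then show "Q \<union> P \<in> column_tilings D"
      using X by (simp add: Un_absorb2)
  qed
  then show "(\<lambda>(X, Q, P). (Q \<union> P, P)) \<in> ?B \<rightarrow> ?A"
    by fastforce
  show "(\<lambda>(X, Q, P). (Q \<union> P, P)) (?split z) = z" if "z \<in> ?A" for z
    using that by auto
  show "?split ((\<lambda>(X, Q, P). (Q \<union> P, P)) z) = z" if z: "z \<in> ?B" for z
  proof -
    obtain X Q P where "z = (X, Q, P)" "X \<subseteq> D" "Q \<in> column_tilings (D - X)" "P \<in> column_tilings X"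
      using z by auto
    then show ?thesis
      using join[of X Q P] by simp
  qed
qed

definition signed_column_tilings :: "nat set \<Rightarrow> int" where
  "signed_column_tilings X = (\<Sum>P\<in>column_tilings X. (-1) ^ card P)"

lemma signed_column_tilings_eq:
  assumes "finite X"
  shows "signed_column_tilings X = (-1) ^ (card X div 2) * int (card (column_tilings X))"
proof -
  have "signed_column_tilings X = (\<Sum>P\<in>column_tilings X. (-1) ^ (card X div 2))"
    unfolding signed_column_tilings_def
    using card_column_tiling[OF _ assms] by (intro sum.cong) auto
  then show ?thesis by simp
qed

lemma sum_Pow_minus_one_power_card:
  assumes "finite R" "R \<noteq> {}"
  shows "(\<Sum>P\<in>Pow R. (-1::int) ^ card P) = 0"
proof (rule sum_alternating_cancels)
  show "card {P \<in> Pow R. even (card P)} = card {P \<in> Pow R. odd (card P)}"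
    using card_subsupersets_even_odd[of R "{}"] assms by auto
qed (use assms in simp)

text \<open>The sum counts the pairs of a tiling \<open>R\<close> of \<open>D\<close> and a subset \<open>P \<subseteq> R\<close> with sign \<open>(-1)\<^bsup>|P|\<^esup>\<close>;
  for each \<open>R\<close> the alternating sum over its subsets vanishes unless \<open>R = \<emptyset>\<close>.\<close>

lemma sum_Pow_column_tilings_signed_column_tilings:
  assumes "finite D"
  shows "(\<Sum>X\<in>Pow D. int (card (column_tilings (D - X))) * signed_column_tilings X)
    = (if D = {} then 1 else 0)"
proof (cases "D = {}")
  case False
  have fin: "finite (column_tilings Y)" if "Y \<subseteq> D" for Y
    using assms that finite_column_tilings finite_subset by blast
  have "(\<Sum>X\<in>Pow D. int (card (column_tilings (D - X))) * signed_column_tilings X)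
      = (\<Sum>X\<in>Pow D. \<Sum>QP\<in>column_tilings (D - X) \<times> column_tilings X. (-1::int) ^ card (snd QP))"
    unfolding signed_column_tilings_def sum.cartesian_product' by simp
  also have "\<dots> = (\<Sum>z\<in>(SIGMA X:Pow D. column_tilings (D - X) \<times> column_tilings X).
                    (-1::int) ^ card (snd (snd z)))"
    using assms fin by (subst sum.Sigma) (auto simp: split_def)
  also have "\<dots> = (\<Sum>z\<in>(SIGMA R:column_tilings D. Pow R). (-1::int) ^ card (snd z))"
    using sum.reindex_bij_betw[OF column_tilings_decompose, of "\<lambda>z. (-1::int) ^ card (snd (snd z))"]
    by (simp add: case_prod_beta)
  also have "\<dots> = (\<Sum>R\<in>column_tilings D. \<Sum>P\<in>Pow R. (-1::int) ^ card P)"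
    using assms by (subst sum.Sigma) (auto simp: split_def intro: finite_column_tilings finite_column_tiling)
  also have "\<dots> = 0"
  proof (rule sum.neutral, rule ballI)
    fix R assume R: "R \<in> column_tilings D"
    then have "R \<noteq> {}"
      using False unfolding column_tilings_def by auto
    with R assms show "(\<Sum>P\<in>Pow R. (-1::int) ^ card P) = 0"
      by (intro sum_Pow_minus_one_power_card finite_column_tiling)
  qed
  finally show ?thesis
    using False by simp
qed (simp add: signed_column_tilings_def)

section \<open>Matrices indexed by a set\<close>

text \<open>Square matrices with rows and columns indexed by a set \<open>I\<close>, represented as functions;
  only the entries indexed by \<open>I\<close> are meaningful.\<close>

definition matmul :: "'i set \<Rightarrow> ('i \<Rightarrow> 'i \<Rightarrow> 'a::semiring_0) \<Rightarrow> ('i \<Rightarrow> 'i \<Rightarrow> 'a) \<Rightarrow> 'i \<Rightarrow> 'i \<Rightarrow> 'a" where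
  "matmul I X Y = (\<lambda>i k. \<Sum>j\<in>I. X i j * Y j k)"

definition matone :: "'i \<Rightarrow> 'i \<Rightarrow> 'a::zero_neq_one" where
  "matone i j = (if i = j then 1 else 0)"

primrec matpow :: "'i set \<Rightarrow> ('i \<Rightarrow> 'i \<Rightarrow> 'a::semiring_1) \<Rightarrow> nat \<Rightarrow> 'i \<Rightarrow> 'i \<Rightarrow> 'a" where
  "matpow I X 0 = matone"
| "matpow I X (Suc n) = matmul I (matpow I X n) X"

lemma matmul_assoc: "matmul I (matmul I X Y) Z = matmul I X (matmul I Y Z)"
proof (intro ext)
  fix i k
  have "matmul I (matmul I X Y) Z i k = (\<Sum>l\<in>I. \<Sum>j\<in>I. X i j * Y j l * Z l k)"
    unfolding matmul_def by (simp add: sum_distrib_right)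
  also have "\<dots> = (\<Sum>j\<in>I. \<Sum>l\<in>I. X i j * Y j l * Z l k)"
    by (rule sum.swap)
  also have "\<dots> = matmul I X (matmul I Y Z) i k"
    unfolding matmul_def by (simp add: sum_distrib_left mult.assoc)
  finally show "matmul I (matmul I X Y) Z i k = matmul I X (matmul I Y Z) i k" .
qed

lemma matmul_matone_right:
  fixes X :: "'i \<Rightarrow> 'i \<Rightarrow> 'a::semiring_1"
  assumes "finite I" "k \<in> I"
  shows "matmul I X matone i k = X i k"
proof -
  have "matmul I X matone i k = (\<Sum>j\<in>I. if j = k then X i k else 0)"
    unfolding matmul_def matone_def by (intro sum.cong) auto
  with assms show ?thesis
    by simp
qed

lemma matmul_matone_left:
  fixes X :: "'i \<Rightarrow> 'i \<Rightarrow> 'a::semiring_1"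
  assumes "finite I" "i \<in> I"
  shows "matmul I matone X i k = X i k"
proof -
  have "matmul I matone X i k = (\<Sum>j\<in>I. if j = i then X i k else 0)"
    unfolding matmul_def matone_def by (intro sum.cong) auto
  with assms show ?thesis
    by simp
qed

lemma matmul_cong:
  "(\<And>j. j \<in> I \<Longrightarrow> X i j = X' i j) \<Longrightarrow> (\<And>j. j \<in> I \<Longrightarrow> Y j k = Y' j k)
    \<Longrightarrow> matmul I X Y i k = matmul I X' Y' i k"
  unfolding matmul_def by (intro sum.cong) auto

lemma matpow_add:
  "finite I \<Longrightarrow> i \<in> I \<Longrightarrow> k \<in> I \<Longrightarrow> matpow I X (a + b) i k = matmul I (matpow I X a) (matpow I X b) i k"
proof (induction b arbitrary: k)
  case 0
  then show ?case
    by (simp add: matmul_matone_right)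
next
  case (Suc b)
  have "matpow I X (a + Suc b) i k = matmul I (matmul I (matpow I X a) (matpow I X b)) X i k"
    using Suc by (auto intro: matmul_cong)
  then show ?case
    by (simp add: matmul_assoc)
qed

lemma matpow_Suc_left:
  "finite I \<Longrightarrow> i \<in> I \<Longrightarrow> k \<in> I \<Longrightarrow> matpow I X (Suc n) i k = matmul I X (matpow I X n) i k"
  using matpow_add[of I i k X 1 n] by (auto intro: matmul_cong simp: matmul_matone_left)

definition matzpow :: "'i set \<Rightarrow> ('i \<Rightarrow> 'i \<Rightarrow> 'a::semiring_1) \<Rightarrow> ('i \<Rightarrow> 'i \<Rightarrow> 'a) \<Rightarrow> int \<Rightarrow> 'i \<Rightarrow> 'i \<Rightarrow> 'a"
  where "matzpow I A B n = (if 0 \<le> n then matpow I A (nat n) else matpow I B (nat (- n)))"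

lemma matzpow_of_nat [simp]: "matzpow I A B (int n) = matpow I A n"
  unfolding matzpow_def by simp

lemma matzpow_uminus_of_nat [simp]: "matzpow I A B (- int n) = matpow I B n"
  unfolding matzpow_def by (cases "n = 0") auto

lemma matzpow_add_one:
  assumes "finite I" and inverse: "\<And>i j. i \<in> I \<Longrightarrow> j \<in> I \<Longrightarrow> matmul I B A i j = matone i j"
    and "i \<in> I" "k \<in> I"
  shows "matzpow I A B (n + 1) i k = matmul I (matzpow I A B n) A i k"
proof (cases "0 \<le> n")
  case True
  then have "nat (n + 1) = Suc (nat n)"
    by simp
  with True show ?thesis
    unfolding matzpow_def by simp
next
  case False
  define p where "p = nat (- n - 1)"
  have "nat (- n) = Suc p"
    using False unfolding p_def by (simp add: Suc_nat_eq_nat_zadd1)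
  then have "matmul I (matzpow I A B n) A i k = matmul I (matpow I B p) (matmul I B A) i k"
    using False unfolding matzpow_def by (simp add: matmul_assoc)
  also have "\<dots> = matpow I B p i k"
    using assms by (simp add: matmul_cong[of I _ _ _ _ _ matone] matmul_matone_right)
  also have "\<dots> = matzpow I A B (n + 1) i k"
    using False unfolding matzpow_def p_def by auto
  finally show ?thesis ..
qed

lemma matzpow_add_of_nat:
  assumes "finite I" "\<And>i j. i \<in> I \<Longrightarrow> j \<in> I \<Longrightarrow> matmul I B A i j = matone i j"
    and "i \<in> I" "k \<in> I"
  shows "matzpow I A B (n + int p) i k = matmul I (matzpow I A B n) (matpow I A p) i k"
  using assms(4)
proof (induction p arbitrary: k)
  case 0
  then show ?case
    using assms(1) by (simp add: matmul_matone_right)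
next
  case (Suc p)
  have "n + int (Suc p) = (n + int p) + 1"
    by simp
  then have "matzpow I A B (n + int (Suc p)) i k = matmul I (matzpow I A B (n + int p)) A i k"
    using matzpow_add_one[OF assms(1,2,3) Suc.prems] by metis
  also have "\<dots> = matmul I (matmul I (matzpow I A B n) (matpow I A p)) A i k"
    using Suc.IH by (auto intro: matmul_cong)
  finally show ?case
    by (simp add: matmul_assoc)
qed

section \<open>Linear recurrences\<close>

lemma linear_dependence_of_functions:
  fixes w :: "nat \<Rightarrow> 'i \<Rightarrow> 'a::idom"
  assumes "finite I"
  shows "\<exists>c. (\<exists>k\<le>card I. c k \<noteq> 0) \<and> (\<forall>s\<in>I. (\<Sum>k=0..card I. c k * w k s) = 0)"
proof -
  define N where "N = card I"
  obtain h where h: "bij_betw h {0..<N} I"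
    using ex_bij_betw_nat_finite[OF assms] unfolding N_def by blast
  text \<open>The \<open>(N+1) \<times> (N+1)\<close> matrix \<open>(w k (h i))\<^sub>i\<^sub>k\<close>, padded by a zero row, is singular.\<close>
  define C :: "'a mat" where "C = mat (Suc N) (Suc N) (\<lambda>(i, k). if i < N then w k (h i) else 0)"
  have C: "C \<in> carrier_mat (Suc N) (Suc N)"
    unfolding C_def by simp
  have "C = mat\<^sub>r (Suc N) (Suc N) (\<lambda>i. if i = N then 0\<^sub>v (Suc N) else vec (Suc N) (\<lambda>k. w k (h i)))"
    unfolding C_def by (rule eq_matI) auto
  then have "det C = 0"
    by (simp add: det_row_0)
  then obtain v where v: "v \<in> carrier_vec (Suc N)" "v \<noteq> 0\<^sub>v (Suc N)" "C *\<^sub>v v = 0\<^sub>v (Suc N)"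
    using det_0_iff_vec_prod_zero[OF C] by auto
  from v(1,2) obtain k where "k < Suc N" "v $ k \<noteq> 0"
    by (auto simp: vec_eq_iff)
  moreover have "(\<Sum>k=0..N. v $ k * w k s) = 0" if "s \<in> I" for s
  proof -
    obtain i where i: "i < N" "s = h i"
      using h \<open>s \<in> I\<close> by (auto simp: bij_betw_def)
    have "(C *\<^sub>v v) $ i = 0"
      using v(3) i by simp
    then have "row C i \<bullet> v = 0"
      using C i by simp
    moreover have "row C i \<bullet> v = (\<Sum>k\<in>{0..<Suc N}. w k (h i) * v $ k)"
      unfolding scalar_prod_def using v(1) i by (auto simp: C_def intro!: sum.cong)
    moreover have "{0..<Suc N} = {0..N}"
      by auto
    ultimately show ?thesis
      using i by (simp add: mult.commute)
  qed
  ultimately show ?thesis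
    unfolding N_def by (intro exI[of _ "\<lambda>k. v $ k"]) (auto simp: less_Suc_eq_le)
qed

lemma linear_recurrence_normalize:
  fixes c :: "nat \<Rightarrow> 'a::semiring_0"
  assumes "c k \<noteq> 0" "k \<le> N" and rec: "\<And>n. (\<Sum>j=0..N. c j * u (n + int j)) = 0"
  shows "\<exists>d b. b 0 \<noteq> 0 \<and> b d \<noteq> 0 \<and> (\<forall>n. (\<Sum>j=0..d. b j * u (n + int j)) = 0)"
proof -
  define K where "K = {k. k \<le> N \<and> c k \<noteq> 0}"
  have K: "finite K" "K \<noteq> {}"
    using assms(1,2) unfolding K_def by auto
  define l where "l = Min K"
  define r where "r = Max K"
  have lr: "l \<in> K" "r \<in> K" "l \<le> r"
    using K unfolding l_def r_def by auto
  have outside: "c k = 0" if "k < l \<or> r < k" "k \<le> N" for k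
  proof (rule ccontr)
    assume "c k \<noteq> 0"
    with that(2) have "k \<in> K"
      unfolding K_def by simp
    then have "l \<le> k" "k \<le> r"
      using K unfolding l_def r_def by auto
    with that(1) show False
      by simp
  qed
  define b where "b j = c (j + l)" for j
  have "(\<Sum>j=0..r - l. b j * u (n + int j)) = 0" for n
  proof -
    have "(\<Sum>j=0..r - l. b j * u (n + int j)) = (\<Sum>j=0..r - l. c (j + l) * u ((n - int l) + int (j + l)))"
      unfolding b_def by simp
    also have "\<dots> = (\<Sum>j=l..r. c j * u ((n - int l) + int j))"
      using lr(3) by (subst sum.shift_bounds_cl_nat_ivl[symmetric]) simp
    also have "\<dots> = (\<Sum>j=0..N. c j * u ((n - int l) + int j))"
      using lr outside unfolding K_def by (intro sum.mono_neutral_left) auto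
    finally show ?thesis
      using rec by simp
  qed
  moreover have "b 0 \<noteq> 0" "b (r - l) \<noteq> 0"
    using lr unfolding b_def K_def by auto
  ultimately show ?thesis
    by blast
qed

lemma linear_recurrence_vanishes:
  fixes v :: "int \<Rightarrow> 'a::idom"
  assumes "b 0 \<noteq> 0" and rec: "\<And>n. (\<Sum>k=0..d. b k * v (n + int k)) = 0"
    and zero: "\<And>n. n \<ge> N \<Longrightarrow> v n = 0"
  shows "v n = 0"
proof -
  have "\<forall>n\<ge>N - int t. v n = 0" for t
  proof (induction t)
    case 0
    then show ?case
      using zero by simp
  next
    case (Suc t)
    show ?case
    proof (intro allI impI)
      fix n assume n: "n \<ge> N - int (Suc t)"
      have "0 = b 0 * v n + (\<Sum>k=Suc 0..d. b k * v (n + int k))"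
        using rec[of n] by (simp add: sum.atLeast_Suc_atMost)
      also have "(\<Sum>k=Suc 0..d. b k * v (n + int k)) = 0"
        using Suc.IH n by (intro sum.neutral) auto
      finally show "v n = 0"
        using assms(1) by simp
    qed
  qed
  moreover have "n \<ge> N - int (nat (N - n))"
    by simp
  ultimately show ?thesis
    by blast
qed

lemma linear_recurrence_propagates_backwards:
  fixes u :: "int \<Rightarrow> 'a::idom"
  assumes "b 0 \<noteq> 0" and rec: "\<And>n. (\<Sum>k=0..d. b k * u (n + int k)) = 0"
    and tail: "\<And>n. n \<ge> N \<Longrightarrow> (\<Sum>k=0..d'. b' k * u (n + int k)) = 0"
  shows "(\<Sum>k=0..d'. b' k * u (n + int k)) = 0"
proof -
  define v where "v n = (\<Sum>k=0..d'. b' k * u (n + int k))" for n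
  have "(\<Sum>k=0..d. b k * v (n + int k)) = 0" for n
  proof -
    have "(\<Sum>k=0..d. b k * v (n + int k)) = (\<Sum>k'=0..d'. b' k' * (\<Sum>k=0..d. b k * u ((n + int k') + int k)))"
      unfolding v_def sum_distrib_left by (subst sum.swap) (simp add: ac_simps)
    also have "\<dots> = 0"
      using rec by simp
    finally show ?thesis .
  qed
  with assms(1) have "v n = 0"
    by (rule linear_recurrence_vanishes[where N = N]) (simp add: v_def tail)
  then show ?thesis
    unfolding v_def .
qed

section \<open>The transfer matrix and its inverse\<close>

definition rows :: "nat \<Rightarrow> nat set" where
  "rows m = {1..m}"

lemma finite_rows [simp]: "finite (rows m)"
  unfolding rows_def by simp

lemma card_rows [simp]: "card (rows m) = m"
  unfolding rows_def by simp

lemma mem_rows [simp]: "i \<in> rows m \<longleftrightarrow> 1 \<le> i \<and> i \<le> m"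
  unfolding rows_def by simp

text \<open>The transfer matrix of the domino tilings of height \<open>m\<close>, indexed by the sets of rows: \<open>S\<close> is
  the set of rows in which horizontal dominoes enter a column from the left, \<open>T\<close> the set of rows in
  which they leave it to the right, and the rest of the column is tiled by vertical dominoes.\<close>

definition transfer :: "nat \<Rightarrow> nat set \<Rightarrow> nat set \<Rightarrow> int" where
  "transfer m S T = (if S \<inter> T = {} then int (card (column_tilings (rows m - (S \<union> T)))) else 0)"

definition transfer_inv :: "nat \<Rightarrow> nat set \<Rightarrow> nat set \<Rightarrow> int" where
  "transfer_inv m S T = (if S \<union> T = rows m then signed_column_tilings (S \<inter> T) else 0)"

lemma transfer_commute: "transfer m S T = transfer m T S"
  unfolding transfer_def by (simp add: Int_commute Un_commute)

lemma transfer_inv_commute: "transfer_inv m S T = transfer_inv m T S"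
  unfolding transfer_inv_def by (simp add: Int_commute Un_commute)

lemma matmul_transfer_transfer_inv:
  assumes S: "S \<subseteq> rows m" and U: "U \<subseteq> rows m"
  shows "matmul (Pow (rows m)) (transfer m) (transfer_inv m) S U = matone S U"
proof -
  let ?F = "\<lambda>T. transfer m S T * transfer_inv m T U"
  have support: "S \<inter> T = {} \<and> T \<union> U = rows m" if "?F T \<noteq> 0" for T
    using that unfolding transfer_def transfer_inv_def by (auto split: if_splits)
  show ?thesis
  proof (cases "S \<subseteq> U")
    case False
    then have "?F T = 0" for T
      using support S by blast
    then have "matmul (Pow (rows m)) (transfer m) (transfer_inv m) S U = 0"
      unfolding matmul_def by (intro sum.neutral) simp
    moreover have "S \<noteq> U"
      using False by blast
    ultimately show ?thesis
      unfolding matone_def by simp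
  next
    case True
    define D where "D = U - S"
    define g where "g X = (rows m - U) \<union> X" for X
    have inj: "inj_on g (Pow D)"
      unfolding g_def D_def inj_on_def by blast
    have "g ` Pow D \<subseteq> Pow (rows m)"
      using U unfolding g_def D_def by auto
    moreover have "T \<in> g ` Pow D" if "T \<in> Pow (rows m)" "?F T \<noteq> 0" for T
    proof
      show "T = g (T \<inter> U)" "T \<inter> U \<in> Pow D"
        using that support[OF that(2)] unfolding g_def D_def by auto
    qed
    ultimately have "matmul (Pow (rows m)) (transfer m) (transfer_inv m) S U = (\<Sum>T\<in>g ` Pow D. ?F T)"
      unfolding matmul_def by (intro sum.mono_neutral_right) auto
    also have "\<dots> = (\<Sum>X\<in>Pow D. ?F (g X))"
      using sum.reindex[OF inj] by simp
    also have "\<dots> = (\<Sum>X\<in>Pow D. int (card (column_tilings (D - X))) * signed_column_tilings X)"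
    proof (rule sum.cong)
      fix X assume "X \<in> Pow D"
      then have "S \<inter> g X = {}" "rows m - (S \<union> g X) = D - X" "g X \<union> U = rows m" "g X \<inter> U = X"
        using True U unfolding g_def D_def by auto
      then show "?F (g X) = int (card (column_tilings (D - X))) * signed_column_tilings X"
        unfolding transfer_def transfer_inv_def by simp
    qed simp
    also have "\<dots> = (if S = U then 1 else 0)"
      using True U finite_subset[of D "rows m"]
      by (subst sum_Pow_column_tilings_signed_column_tilings) (auto simp: D_def)
    finally show ?thesis
      unfolding matone_def .
  qed
qed

lemma matmul_transfer_inv_transfer:
  assumes "S \<subseteq> rows m" "U \<subseteq> rows m"
  shows "matmul (Pow (rows m)) (transfer_inv m) (transfer m) S U = matone S U"
proof -
  have "matmul (Pow (rows m)) (transfer_inv m) (transfer m) S U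
      = matmul (Pow (rows m)) (transfer m) (transfer_inv m) U S"
    unfolding matmul_def by (simp add: transfer_commute transfer_inv_commute mult.commute)
  also have "\<dots> = matone U S"
    by (rule matmul_transfer_transfer_inv[OF assms(2,1)])
  finally show ?thesis
    unfolding matone_def by auto
qed

lemma even_if_transfer_nonzero:
  assumes "S \<subseteq> rows m" "T \<subseteq> rows m" "transfer m S T \<noteq> 0"
  shows "even (card S + card T + m)"
proof -
  have fin: "finite S" "finite T"
    using finite_subset[OF assms(1)] finite_subset[OF assms(2)] by auto
  have ST: "S \<inter> T = {}" and "column_tilings (rows m - (S \<union> T)) \<noteq> {}"
    using assms(3) unfolding transfer_def by (auto split: if_splits)
  then have "even (card (rows m - (S \<union> T)))"
    by (simp add: even_card_if_column_tilings_nonempty)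
  moreover have "card (S \<union> T) = card S + card T"
    using fin ST by (rule card_Un_disjoint)
  moreover have "card (S \<union> T) \<le> m"
    using card_mono[OF finite_rows, of "S \<union> T"] assms(1,2) by simp
  moreover have "card (rows m - (S \<union> T)) = m - card (S \<union> T)"
    using assms(1,2) fin by (simp add: card_Diff_subset)
  ultimately show ?thesis
    by presburger
qed

lemma even_if_matpow_transfer_nonzero:
  assumes "S \<subseteq> rows m" "T \<subseteq> rows m" "matpow (Pow (rows m)) (transfer m) n S T \<noteq> 0"
  shows "even (card S + card T + n * m)"
  using assms(2,3)
proof (induction n arbitrary: T)
  case 0
  then show ?case
    by (simp add: matone_def split: if_splits)
next
  case (Suc n)
  then have "(\<Sum>R\<in>Pow (rows m). matpow (Pow (rows m)) (transfer m) n S R * transfer m R T) \<noteq> 0"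
    by (simp add: matmul_def)
  then obtain R where R: "R \<subseteq> rows m" "matpow (Pow (rows m)) (transfer m) n S R * transfer m R T \<noteq> 0"
    by (meson PowD sum.neutral)
  then have "even (card S + card R + n * m)" "even (card R + card T + m)"
    using Suc.IH[OF R(1)] even_if_transfer_nonzero[OF R(1) Suc.prems(1)] by auto
  then show ?case
    by simp presburger
qed

lemma transfer_inv_eq_transfer_compl:
  assumes "T \<subseteq> rows m" "U \<subseteq> rows m"
  shows "transfer_inv m T U = (-1) ^ (card (T \<inter> U) div 2) * transfer m (rows m - T) (rows m - U)"
proof -
  have "(rows m - T) \<inter> (rows m - U) = {} \<longleftrightarrow> T \<union> U = rows m"
    "rows m - ((rows m - T) \<union> (rows m - U)) = T \<inter> U"
    using assms by auto
  moreover have "finite (T \<inter> U)"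
    using finite_subset[OF assms(1)] by simp
  ultimately show ?thesis
    unfolding transfer_inv_def transfer_def by (simp add: signed_column_tilings_eq)
qed

text \<open>The sign relating \<open>B\<^sup>n(\<emptyset>, T)\<close> to \<open>A\<^sup>n(all rows, complement of T)\<close>, where \<open>|T|\<close> is \<open>t\<close>.\<close>

definition reciprocity_sign :: "nat \<Rightarrow> nat \<Rightarrow> nat \<Rightarrow> int" where
  "reciprocity_sign m n t = (-1) ^ ((t + n * m) div 2 + m * (n * (n + 1) div 2))"

lemma reciprocity_sign_Suc:
  assumes "even (t + n * m)" "t + u = m + w" "even w"
  shows "reciprocity_sign m n t * (-1) ^ (w div 2) = reciprocity_sign m (Suc n) u"
proof -
  have "Suc n * (Suc n + 1) = n * (n + 1) + 2 * (n + 1)"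
    by (simp add: algebra_simps)
  moreover have "(q + 2 * (n + 1)) div 2 = q div 2 + n + 1" for q :: nat
    by presburger
  ultimately have "Suc n * (Suc n + 1) div 2 = n * (n + 1) div 2 + n + 1"
    by simp
  then have exponent: "(u + Suc n * m) div 2 + m * (Suc n * (Suc n + 1) div 2)
      = (u + (n * m + m)) div 2 + (m * (n * (n + 1) div 2) + n * m + m)"
    by (simp add: algebra_simps)
  have parity: "even (((t + p) div 2 + r + w div 2) + ((u + (p + m)) div 2 + (r + p + m)))"
    if tp: "even (t + p)" for p r :: nat
  proof -
    obtain a where a: "t + p = 2 * a"
      using tp by blast
    obtain c where c: "w = 2 * c"
      using assms(3) by blast
    have "u + (p + m) + 2 * t = 2 * (m + c + a)"
      using a c assms(2) by simp
    then have "even (u + (p + m))"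
      by (metis dvd_add_times_triv_right_iff dvd_triv_left mult.commute)
    then obtain d where d: "u + (p + m) = 2 * d" ..
    have "(a + r + c) + (d + (r + p + m)) + 2 * t = 2 * (2 * a + c + m + r)"
      using a c d assms(2) by simp
    then have "even ((a + r + c) + (d + (r + p + m)))"
      by (metis dvd_add_times_triv_right_iff dvd_triv_left mult.commute)
    then show ?thesis
      using a c d by simp
  qed
  have minus_one_power_eq: "even (x + y) \<Longrightarrow> (-1::int) ^ x = (-1) ^ y" for x y :: nat
    by (auto simp: minus_one_power_iff)
  have "reciprocity_sign m n t * (-1) ^ (w div 2)
      = (-1) ^ ((t + n * m) div 2 + m * (n * (n + 1) div 2) + w div 2)"
    unfolding reciprocity_sign_def by (simp add: power_add)
  also have "\<dots> = (-1) ^ ((u + (n * m + m)) div 2 + (m * (n * (n + 1) div 2) + n * m + m))"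
    using parity[OF assms(1)] by (rule minus_one_power_eq)
  also have "\<dots> = reciprocity_sign m (Suc n) u"
    unfolding reciprocity_sign_def exponent ..
  finally show ?thesis .
qed

lemma reciprocity_sign_step:
  assumes T: "T \<subseteq> rows m" and U: "U \<subseteq> rows m"
    and nonzero: "matpow (Pow (rows m)) (transfer m) n (rows m) (rows m - T)
      * transfer m (rows m - T) (rows m - U) \<noteq> 0"
  shows "reciprocity_sign m n (card T) * (-1) ^ (card (T \<inter> U) div 2)
    = reciprocity_sign m (Suc n) (card U)"
proof (rule reciprocity_sign_Suc)
  have fin: "finite T" "finite U"
    using finite_subset[OF T] finite_subset[OF U] by auto
  have "card T \<le> m" "card (rows m - T) = m - card T"
    using T card_mono[OF _ T] by (simp_all add: card_Diff_subset fin)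
  moreover have "even (m + card (rows m - T) + n * m)"
    using even_if_matpow_transfer_nonzero[of "rows m" m "rows m - T" n] nonzero by auto
  ultimately show "even (card T + n * m)"
    by presburger
  have nonzero': "transfer m (rows m - T) (rows m - U) \<noteq> 0"
    using nonzero by auto
  then have "(rows m - T) \<inter> (rows m - U) = {}"
    unfolding transfer_def by (simp split: if_splits)
  then have TU: "T \<union> U = rows m"
    using T U by blast
  have "rows m - ((rows m - T) \<union> (rows m - U)) = T \<inter> U"
    using T U by blast
  with nonzero' have "column_tilings (T \<inter> U) \<noteq> {}"
    unfolding transfer_def by (auto split: if_splits)
  then show "even (card (T \<inter> U))"
    using fin by (simp add: even_card_if_column_tilings_nonempty)
  show "card T + card U = m + card (T \<inter> U)"
    using card_Un_Int[OF fin] TU by simp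
qed

lemma reciprocity_sign_eq_eps_sign:
  assumes "even (k * m)"
  shows "reciprocity_sign m (k + 2) 0 = eps_sign m (int k)"
proof (cases "even m")
  case True
  then obtain a where a: "m = 2 * a" by blast
  have "reciprocity_sign m (k + 2) 0 = (-1::int) ^ ((k + 2) * a + 2 * (a * ((k + 2) * (k + 2 + 1) div 2)))"
    unfolding reciprocity_sign_def a by (simp add: algebra_simps)
  also have "\<dots> = (-1) ^ ((k + 2) * a)" by (simp add: power_add power_mult)
  also have "\<dots> = (if even ((k + 2) * a) then 1 else -1)" by (simp add: minus_one_power_iff)
  also have "\<dots> = eps_sign m (int k)"
  proof -
    have "m mod 4 = 2 \<longleftrightarrow> odd a" unfolding a by presburger
    moreover have "odd (int k) \<longleftrightarrow> odd k" by simp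
    ultimately show ?thesis unfolding eps_sign_def by auto
  qed
  finally show ?thesis .
next
  case False
  then have "even k" using assms by simp
  then obtain b where b: "k = 2 * b" by blast
  have x: "(2 * b + 2) * (2 * b + 2 + 1) div 2 = (b + 1) * (2 * b + 3)"
  proof -
    have "(2 * b + 2) * (2 * b + 2 + 1) = 2 * ((b + 1) * (2 * b + 3))" by (simp add: algebra_simps)
    then show ?thesis by simp
  qed
  have y: "(2 * b + 2) * m div 2 = (b + 1) * m"
  proof -
    have "(2 * b + 2) * m = 2 * ((b + 1) * m)" by (simp add: algebra_simps)
    then show ?thesis by simp
  qed
  have "reciprocity_sign m (k + 2) 0 = (-1::int) ^ ((b + 1) * m + m * ((b + 1) * (2 * b + 3)))"
    by (simp only: reciprocity_sign_def b add_0 x y)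
  also have "(b + 1) * m + m * ((b + 1) * (2 * b + 3)) = 2 * ((b + 1) * m * (b + 2))"
    by (simp add: algebra_simps)
  also have "(-1::int) ^ (2 * ((b + 1) * m * (b + 2))) = 1" by (simp add: power_mult)
  also have "1 = eps_sign m (int k)"
  proof -
    have "m mod 4 \<noteq> 2" using False by presburger
    then show ?thesis unfolding eps_sign_def by simp
  qed
  finally show ?thesis .
qed

lemma matpow_transfer_inv:
  "T \<subseteq> rows m \<Longrightarrow> matpow (Pow (rows m)) (transfer_inv m) n {} T
    = reciprocity_sign m n (card T) * matpow (Pow (rows m)) (transfer m) n (rows m) (rows m - T)"
proof (induction n arbitrary: T)
  case 0
  then show ?case
    by (auto simp: matone_def reciprocity_sign_def)
next
  case (Suc n U)
  let ?I = "Pow (rows m)" and ?c = "\<lambda>T. rows m - T"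
  let ?A = "matpow ?I (transfer m) n" and ?B = "matpow ?I (transfer_inv m) n"
  have "matpow ?I (transfer_inv m) (Suc n) {} U = (\<Sum>T\<in>?I. ?B {} T * transfer_inv m T U)"
    by (simp add: matmul_def)
  also have "\<dots> = (\<Sum>T\<in>?I. reciprocity_sign m (Suc n) (card U)
                    * (?A (rows m) (?c T) * transfer m (?c T) (?c U)))"
  proof (rule sum.cong)
    fix T assume T: "T \<in> ?I"
    then have step: "?B {} T * transfer_inv m T U = reciprocity_sign m n (card T)
        * (-1) ^ (card (T \<inter> U) div 2) * (?A (rows m) (?c T) * transfer m (?c T) (?c U))"
      using Suc transfer_inv_eq_transfer_compl[of T m U] by simp
    show "?B {} T * transfer_inv m T U = reciprocity_sign m (Suc n) (card U)
        * (?A (rows m) (?c T) * transfer m (?c T) (?c U))"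
    proof (cases "?A (rows m) (?c T) * transfer m (?c T) (?c U) = 0")
      case False
      with T Suc.prems step show ?thesis
        using reciprocity_sign_step[of T m U n] by simp
    qed (use step in simp)
  qed simp
  also have "\<dots> = reciprocity_sign m (Suc n) (card U) * (\<Sum>T\<in>?I. ?A (rows m) T * transfer m T (?c U))"
    unfolding sum_distrib_left[symmetric]
    by (rule arg_cong[where f = "(*) _"], rule sum.reindex_bij_witness[where i = ?c and j = ?c]) auto
  also have "\<dots> = reciprocity_sign m (Suc n) (card U) * matpow ?I (transfer m) (Suc n) (rows m) (?c U)"
    by (simp add: matmul_def)
  finally show ?case .
qed

lemma transfer_all_right: "T \<subseteq> rows m \<Longrightarrow> transfer m T (rows m) = (if T = {} then 1 else 0)"
  unfolding transfer_def by (auto simp: Int_absorb2)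

lemma matpow_transfer_all_all:
  "matpow (Pow (rows m)) (transfer m) (Suc (Suc n)) (rows m) (rows m) = matpow (Pow (rows m)) (transfer m) n {} {}"
proof -
  let ?I = "Pow (rows m)" and ?A = "matpow (Pow (rows m)) (transfer m)"
  have all_right: "matmul ?I X (transfer m) S (rows m) = X S {}" for X and S :: "nat set"
  proof -
    have "matmul ?I X (transfer m) S (rows m) = (\<Sum>T\<in>?I. if T = {} then X S T else 0)"
      unfolding matmul_def by (intro sum.cong) (auto simp: transfer_all_right)
    then show ?thesis
      by simp
  qed
  have all_left: "matmul ?I (transfer m) Y (rows m) U = Y {} U" for Y and U :: "nat set"
  proof -
    have "matmul ?I (transfer m) Y (rows m) U = (\<Sum>T\<in>?I. if T = {} then Y T U else 0)"
      unfolding matmul_def by (intro sum.cong) (auto simp: transfer_all_right transfer_commute)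
    then show ?thesis
      by simp
  qed
  have "?A (Suc (Suc n)) (rows m) (rows m) = ?A (Suc n) (rows m) {}"
    by (simp only: matpow.simps(2) all_right)
  also have "\<dots> = matmul ?I (transfer m) (?A n) (rows m) {}"
    by (rule matpow_Suc_left) auto
  also have "\<dots> = ?A n {} {}"
    by (rule all_left)
  finally show ?thesis .
qed

section \<open>Counting tilings column by column\<close>

definition hdomino :: "nat \<Rightarrow> nat \<Rightarrow> (nat \<times> nat) set" where
  "hdomino i j = {(i, j), (i, Suc j)}"

definition vdomino :: "nat \<Rightarrow> nat \<Rightarrow> (nat \<times> nat) set" where
  "vdomino i j = {(i, j), (Suc i, j)}"

lemma mem_hdomino [simp]: "(a, b) \<in> hdomino i j \<longleftrightarrow> a = i \<and> (b = j \<or> b = Suc j)"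
  unfolding hdomino_def by auto

lemma mem_vdomino [simp]: "(a, b) \<in> vdomino i j \<longleftrightarrow> b = j \<and> (a = i \<or> a = Suc i)"
  unfolding vdomino_def by auto

lemma hdomino_eq_iff [simp]: "hdomino i j = hdomino i' j' \<longleftrightarrow> i = i' \<and> j = j'"
  unfolding hdomino_def by (auto simp: doubleton_eq_iff)

lemma vdomino_eq_iff [simp]: "vdomino i j = vdomino i' j' \<longleftrightarrow> i = i' \<and> j = j'"
  unfolding vdomino_def by (auto simp: doubleton_eq_iff)

lemma hdomino_neq_vdomino [simp]: "hdomino i j \<noteq> vdomino i' j'" "vdomino i' j' \<noteq> hdomino i j"
  unfolding hdomino_def vdomino_def by (auto simp: doubleton_eq_iff)

lemma doubleton_Suc_eq_iff [simp]: "{i, Suc i} = {i', Suc i'} \<longleftrightarrow> i = (i' :: nat)"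
  by (auto simp: doubleton_eq_iff)

lemma mem_grid_cells [simp]: "(a, b) \<in> grid_cells m n \<longleftrightarrow> 1 \<le> a \<and> a \<le> m \<and> 1 \<le> b \<and> b \<le> n"
  unfolding grid_cells_def by auto

lemma grid_edges_iff: "e \<in> grid_edges m n \<longleftrightarrow>
   (\<exists>i j. e = hdomino i j \<and> 1 \<le> i \<and> i \<le> m \<and> 1 \<le> j \<and> Suc j \<le> n) \<or>
   (\<exists>i j. e = vdomino i j \<and> 1 \<le> i \<and> Suc i \<le> m \<and> 1 \<le> j \<and> j \<le> n)"
proof
  assume "e \<in> grid_edges m n"
  then obtain a b c d where e: "e = {(a,b),(c,d)}" "(a,b) \<in> grid_cells m n" "(c,d) \<in> grid_cells m n"
    "grid_adj (a,b) (c,d)" unfolding grid_edges_def by auto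
  from e(4) consider "a = c" "d = Suc b" | "a = c" "b = Suc d" | "b = d" "c = Suc a" | "b = d" "a = Suc c"
    unfolding grid_adj_def by auto
  then show "(\<exists>i j. e = hdomino i j \<and> 1 \<le> i \<and> i \<le> m \<and> 1 \<le> j \<and> Suc j \<le> n) \<or>
   (\<exists>i j. e = vdomino i j \<and> 1 \<le> i \<and> Suc i \<le> m \<and> 1 \<le> j \<and> j \<le> n)"
  proof cases
    case 1
    then have "e = hdomino a b" using e(1) by (simp add: hdomino_def)
    then show ?thesis using e(2,3) 1 by auto
  next
    case 2
    then have "e = hdomino a d" using e(1) by (auto simp: hdomino_def)
    then show ?thesis using e(2,3) 2 by auto
  next
    case 3
    then have "e = vdomino a b" using e(1) by (simp add: vdomino_def)
    then show ?thesis using e(2,3) 3 by auto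
  next
    case 4
    then have "e = vdomino c b" using e(1) by (auto simp: vdomino_def)
    then show ?thesis using e(2,3) 4 by auto
  qed
next
  assume "(\<exists>i j. e = hdomino i j \<and> 1 \<le> i \<and> i \<le> m \<and> 1 \<le> j \<and> Suc j \<le> n) \<or>
   (\<exists>i j. e = vdomino i j \<and> 1 \<le> i \<and> Suc i \<le> m \<and> 1 \<le> j \<and> j \<le> n)"
  then show "e \<in> grid_edges m n"
  proof
    assume "\<exists>i j. e = hdomino i j \<and> 1 \<le> i \<and> i \<le> m \<and> 1 \<le> j \<and> Suc j \<le> n"
    then obtain i j where "e = hdomino i j" "1 \<le> i" "i \<le> m" "1 \<le> j" "Suc j \<le> n" by blast
    then show ?thesis unfolding grid_edges_def hdomino_def
      by (intro CollectI exI[of _ "(i,j)"] exI[of _ "(i,Suc j)"]) (auto simp: grid_cells_def grid_adj_def)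
  next
    assume "\<exists>i j. e = vdomino i j \<and> 1 \<le> i \<and> Suc i \<le> m \<and> 1 \<le> j \<and> j \<le> n"
    then obtain i j where "e = vdomino i j" "1 \<le> i" "Suc i \<le> m" "1 \<le> j" "j \<le> n" by blast
    then show ?thesis unfolding grid_edges_def vdomino_def
      by (intro CollectI exI[of _ "(i,j)"] exI[of _ "(Suc i,j)"]) (auto simp: grid_cells_def grid_adj_def)
  qed
qed

lemma finite_grid_edges: "finite (grid_edges m n)"
proof -
  have "grid_edges m n \<subseteq> (\<lambda>(p, q). {p, q}) ` (grid_cells m n \<times> grid_cells m n)"
    unfolding grid_edges_def by auto
  moreover have "finite (grid_cells m n)"
    by (rule finite_subset[of _ "{1..m} \<times> {1..n}"]) (auto simp: grid_cells_def)
  ultimately show ?thesis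
    by (meson finite_SigmaI finite_imageI finite_subset)
qed

definition protrusions :: "nat \<Rightarrow> nat set \<Rightarrow> (nat \<times> nat) set set" where
  "protrusions n T = (\<lambda>i. hdomino i n) ` T"

definition column_dominoes :: "nat \<Rightarrow> nat set set \<Rightarrow> (nat \<times> nat) set set" where
  "column_dominoes j P = {vdomino i j | i. {i, Suc i} \<in> P}"

text \<open>Tilings of the \<open>m \<times> n\<close> board in which the cells \<open>(i, n)\<close>, \<open>i \<in> T\<close>, are covered by horizontal
  dominoes sticking out into column \<open>n + 1\<close>; nothing sticks out of the empty board.\<close>

definition protruding_tilings :: "nat \<Rightarrow> nat \<Rightarrow> nat set \<Rightarrow> (nat \<times> nat) set set set" where
  "protruding_tilings m n T = {M. M \<subseteq> grid_edges m n \<union> protrusions n T \<and> protrusions n T \<subseteq> M \<and>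
      (\<forall>v\<in>grid_cells m n. \<exists>!e. e \<in> M \<and> v \<in> e) \<and> (n = 0 \<longrightarrow> T = {})}"

lemma unique_cover:
  assumes "\<forall>v\<in>C. \<exists>!e. e \<in> M \<and> v \<in> e" "v \<in> C" "e1 \<in> M" "v \<in> e1" "e2 \<in> M" "v \<in> e2"
  shows "e1 = e2"
  using assms by blast

lemma protruding_tilings_empty: "protruding_tilings m n {} = {M. grid_perfect_matching m n M}"
  unfolding protruding_tilings_def grid_perfect_matching_def protrusions_def by auto

lemma finite_protruding_tilings:
  assumes "finite T"
  shows "finite (protruding_tilings m n T)"
proof (rule finite_subset)
  show "protruding_tilings m n T \<subseteq> Pow (grid_edges m n \<union> protrusions n T)"
    unfolding protruding_tilings_def by auto
  show "finite (Pow (grid_edges m n \<union> protrusions n T))"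
    using assms finite_grid_edges unfolding protrusions_def by simp
qed

lemma protruding_tilings_0: "protruding_tilings m 0 T = (if T = {} then {{}} else {})"
proof -
  have "grid_edges m 0 = {}"
    using grid_edges_iff by auto
  moreover have "grid_cells m 0 = {}"
    unfolding grid_cells_def by auto
  ultimately show ?thesis
    unfolding protruding_tilings_def protrusions_def by auto
qed

lemma grid_edges_protrusions_cases:
  assumes "e \<in> grid_edges m n \<union> protrusions k U"
  obtains (H) i j where "e = hdomino i j" "1 \<le> i" "i \<le> m" "1 \<le> j" "Suc j \<le> n"
    | (V) i j where "e = vdomino i j" "1 \<le> i" "Suc i \<le> m" "1 \<le> j" "j \<le> n"
    | (X) i where "e = hdomino i k" "i \<in> U"
  using assms unfolding Un_iff grid_edges_iff protrusions_def image_iff by blast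

definition crossing_rows :: "nat \<Rightarrow> nat \<Rightarrow> (nat \<times> nat) set set \<Rightarrow> nat set" where
  "crossing_rows m n M = {i \<in> rows m. hdomino i n \<in> M}"

definition first_columns :: "nat \<Rightarrow> nat \<Rightarrow> (nat \<times> nat) set set \<Rightarrow> (nat \<times> nat) set set" where
  "first_columns m n M = M \<inter> (grid_edges m n \<union> protrusions n (crossing_rows m n M))"

definition last_column_pairs :: "nat \<Rightarrow> (nat \<times> nat) set set \<Rightarrow> nat set set" where
  "last_column_pairs n M = {{i, Suc i} | i. vdomino i (Suc n) \<in> M}"

definition split_last_column
  :: "nat \<Rightarrow> nat \<Rightarrow> (nat \<times> nat) set set \<Rightarrow> nat set \<times> (nat \<times> nat) set set \<times> nat set set" where
  "split_last_column m n M = (crossing_rows m n M, first_columns m n M, last_column_pairs n M)"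

definition join_last_column
  :: "nat \<Rightarrow> nat set \<Rightarrow> (nat \<times> nat) set set \<Rightarrow> nat set set \<Rightarrow> (nat \<times> nat) set set" where
  "join_last_column n U M' P = M' \<union> column_dominoes (Suc n) P \<union> protrusions (Suc n) U"

definition last_column_splits
  :: "nat \<Rightarrow> nat \<Rightarrow> nat set \<Rightarrow> (nat set \<times> (nat \<times> nat) set set \<times> nat set set) set" where
  "last_column_splits m n U = (SIGMA T:{T. T \<subseteq> rows m \<and> T \<inter> U = {}}.
     protruding_tilings m n T \<times> column_tilings (rows m - (T \<union> U)))"

context
  fixes m n :: nat and U :: "nat set" and M :: "(nat \<times> nat) set set"
  assumes M: "M \<in> protruding_tilings m (Suc n) U"
begin

private lemma edges: "M \<subseteq> grid_edges m (Suc n) \<union> protrusions (Suc n) U"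
  and protrusion_mem: "i \<in> U \<Longrightarrow> hdomino i (Suc n) \<in> M"
  and cover: "\<forall>v\<in>grid_cells m (Suc n). \<exists>!e. e \<in> M \<and> v \<in> e"
  using M unfolding protruding_tilings_def protrusions_def by auto

private lemma vdomino_rows:
  assumes "vdomino i (Suc n) \<in> M"
  shows "1 \<le> i \<and> Suc i \<le> m"
proof -
  have "vdomino i (Suc n) \<in> grid_edges m (Suc n) \<union> protrusions (Suc n) U"
    using edges assms by auto
  then show ?thesis
    by (cases rule: grid_edges_protrusions_cases) auto
qed

lemma crossing_rows_disjoint: "crossing_rows m n M \<inter> U = {}"
proof (rule ccontr)
  assume "crossing_rows m n M \<inter> U \<noteq> {}"
  then obtain i where i: "i \<in> crossing_rows m n M" "i \<in> U" by auto
  then have "hdomino i n \<in> M" "hdomino i (Suc n) \<in> M" "i \<in> rows m"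
    using protrusion_mem unfolding crossing_rows_def by auto
  then have "hdomino i n = hdomino i (Suc n)"
    by (intro unique_cover[OF cover, of "(i, Suc n)"]) auto
  then show False by simp
qed

lemma first_columns_cover: "\<forall>v\<in>grid_cells m n. \<exists>!e. e \<in> first_columns m n M \<and> v \<in> e"
proof
  fix v assume v: "v \<in> grid_cells m n"
  obtain a b where ab: "v = (a, b)" by force
  have vs: "v \<in> grid_cells m (Suc n)" using v ab by auto
  then obtain e where e: "e \<in> M" "v \<in> e" using cover by blast
  have "e \<in> grid_edges m (Suc n) \<union> protrusions (Suc n) U" using edges e by auto
  then have "e \<in> first_columns m n M"
  proof (cases rule: grid_edges_protrusions_cases)
    case (H i j)
    show ?thesis
    proof (cases "j = n")
      case True
      then have "i \<in> crossing_rows m n M" using H e unfolding crossing_rows_def by auto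
      then show ?thesis using e H True unfolding first_columns_def protrusions_def by auto
    next
      case False
      then have "e \<in> grid_edges m n" using H unfolding grid_edges_iff by auto
      then show ?thesis using e unfolding first_columns_def by auto
    qed
  next
    case (V i j)
    then have "e \<in> grid_edges m n" using v ab e unfolding grid_edges_iff by auto
    then show ?thesis using e unfolding first_columns_def by auto
  next
    case (X i)
    then show ?thesis using e v ab by auto
  qed
  moreover have "e' = e" if "e' \<in> first_columns m n M" "v \<in> e'" for e'
    using unique_cover[OF cover vs] e that unfolding first_columns_def by blast
  ultimately show "\<exists>!e. e \<in> first_columns m n M \<and> v \<in> e" using e by blast
qed

lemma first_columns_mem: "first_columns m n M \<in> protruding_tilings m n (crossing_rows m n M)"
  unfolding protruding_tilings_def
proof (intro CollectI conjI)
  show "first_columns m n M \<subseteq> grid_edges m n \<union> protrusions n (crossing_rows m n M)"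
    unfolding first_columns_def by auto
  show "protrusions n (crossing_rows m n M) \<subseteq> first_columns m n M"
    unfolding first_columns_def protrusions_def crossing_rows_def by auto
  show "n = 0 \<longrightarrow> crossing_rows m n M = {}"
  proof
    assume n: "n = 0"
    have False if "i \<in> crossing_rows m n M" for i
    proof -
      have "hdomino i 0 \<in> grid_edges m (Suc n) \<union> protrusions (Suc n) U"
        using that edges n unfolding crossing_rows_def by auto
      then show False using n by (cases rule: grid_edges_protrusions_cases) auto
    qed
    then show "crossing_rows m n M = {}" by blast
  qed
qed (rule first_columns_cover)

lemma last_column_pairs_Union: "\<Union>(last_column_pairs n M) = rows m - (crossing_rows m n M \<union> U)"
proof
  show "\<Union>(last_column_pairs n M) \<subseteq> rows m - (crossing_rows m n M \<union> U)"
  proof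
    fix x assume "x \<in> \<Union>(last_column_pairs n M)"
    then obtain i where i: "x \<in> {i, Suc i}" "vdomino i (Suc n) \<in> M"
      unfolding last_column_pairs_def by auto
    have x: "x \<in> rows m" using i vdomino_rows[OF i(2)] by auto
    have "x \<notin> crossing_rows m n M"
    proof
      assume "x \<in> crossing_rows m n M"
      then have "hdomino x n = vdomino i (Suc n)"
        using i x unfolding crossing_rows_def by (intro unique_cover[OF cover, of "(x, Suc n)"]) auto
      then show False by simp
    qed
    moreover have "x \<notin> U"
    proof
      assume "x \<in> U"
      then have "hdomino x (Suc n) = vdomino i (Suc n)"
        using i x protrusion_mem by (intro unique_cover[OF cover, of "(x, Suc n)"]) auto
      then show False by simp
    qed
    ultimately show "x \<in> rows m - (crossing_rows m n M \<union> U)" using x by auto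
  qed
  show "rows m - (crossing_rows m n M \<union> U) \<subseteq> \<Union>(last_column_pairs n M)"
  proof
    fix x assume x: "x \<in> rows m - (crossing_rows m n M \<union> U)"
    then have "(x, Suc n) \<in> grid_cells m (Suc n)" by auto
    then obtain e where e: "e \<in> M" "(x, Suc n) \<in> e" using cover by blast
    have "e \<in> grid_edges m (Suc n) \<union> protrusions (Suc n) U" using edges e by auto
    then show "x \<in> \<Union>(last_column_pairs n M)"
    proof (cases rule: grid_edges_protrusions_cases)
      case (H i j)
      then have "x \<in> crossing_rows m n M" using e x unfolding crossing_rows_def by auto
      then show ?thesis using x by auto
    next
      case (V i j)
      then show ?thesis using e unfolding last_column_pairs_def by auto
    next
      case (X i)
      then show ?thesis using e x by auto
    qed
  qed
qed

lemma last_column_pairs_mem: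
  "last_column_pairs n M \<in> column_tilings (rows m - (crossing_rows m n M \<union> U))"
  unfolding column_tilings_iff
proof (intro conjI ballI impI)
  show "\<exists>i. e = {i, Suc i}" if "e \<in> last_column_pairs n M" for e
    using that unfolding last_column_pairs_def by auto
  fix e e' assume ee: "e \<in> last_column_pairs n M" "e' \<in> last_column_pairs n M" "e \<noteq> e'"
  then obtain i i' where i: "e = {i, Suc i}" "vdomino i (Suc n) \<in> M"
    and i': "e' = {i', Suc i'}" "vdomino i' (Suc n) \<in> M"
    unfolding last_column_pairs_def by auto
  show "e \<inter> e' = {}"
  proof (rule ccontr)
    assume "e \<inter> e' \<noteq> {}"
    then obtain x where x: "x \<in> e" "x \<in> e'" by auto
    have "x \<in> rows m" using x i vdomino_rows[OF i(2)] by auto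
    then have "vdomino i (Suc n) = vdomino i' (Suc n)"
      using x i i' by (intro unique_cover[OF cover, of "(x, Suc n)"]) auto
    then show False using ee i i' by simp
  qed
qed (rule last_column_pairs_Union)

lemma split_last_column_mem: "split_last_column m n M \<in> last_column_splits m n U"
  using crossing_rows_disjoint first_columns_mem last_column_pairs_mem
  unfolding split_last_column_def last_column_splits_def crossing_rows_def by auto

lemma join_split_last_column:
  "join_last_column n U (first_columns m n M) (last_column_pairs n M) = M"
proof
  have vertical: "column_dominoes (Suc n) (last_column_pairs n M) = {e \<in> M. \<exists>i. e = vdomino i (Suc n)}"
    unfolding column_dominoes_def last_column_pairs_def by auto
  show "M \<subseteq> join_last_column n U (first_columns m n M) (last_column_pairs n M)"
  proof
    fix e assume e: "e \<in> M"
    then have "e \<in> grid_edges m (Suc n) \<union> protrusions (Suc n) U" using edges by auto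
    then show "e \<in> join_last_column n U (first_columns m n M) (last_column_pairs n M)"
    proof (cases rule: grid_edges_protrusions_cases)
      case (H i j)
      show ?thesis
      proof (cases "j = n")
        case True
        then have "i \<in> crossing_rows m n M"
          using H e unfolding crossing_rows_def by auto
        then show ?thesis
          using e H True unfolding join_last_column_def first_columns_def protrusions_def by auto
      next
        case False
        then have "e \<in> grid_edges m n"
          using H unfolding grid_edges_iff by auto
        then show ?thesis
          using e unfolding join_last_column_def first_columns_def by auto
      qed
    next
      case (V i j)
      show ?thesis
      proof (cases "j = Suc n")
        case True
        then show ?thesis
          using e V vertical unfolding join_last_column_def by auto
      next
        case False
        then have "e \<in> grid_edges m n"
          using V unfolding grid_edges_iff by auto
        then show ?thesis
          using e unfolding join_last_column_def first_columns_def by auto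
      qed
    qed (auto simp: join_last_column_def protrusions_def)
  qed
  show "join_last_column n U (first_columns m n M) (last_column_pairs n M) \<subseteq> M"
    using vertical protrusion_mem unfolding join_last_column_def first_columns_def protrusions_def by auto
qed

end

context
  fixes m n :: nat and U T :: "nat set" and M' :: "(nat \<times> nat) set set" and P :: "nat set set"
  assumes T: "T \<subseteq> rows m" "T \<inter> U = {}"
    and M': "M' \<in> protruding_tilings m n T"
    and P: "P \<in> column_tilings (rows m - (T \<union> U))"
begin

private lemma M'_edges: "M' \<subseteq> grid_edges m n \<union> protrusions n T"
  and M'_protrusions: "protrusions n T \<subseteq> M'"
  and M'_cover: "\<forall>v\<in>grid_cells m n. \<exists>!e. e \<in> M' \<and> v \<in> e"
  and M'_empty: "n = 0 \<Longrightarrow> T = {}"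
  using M' unfolding protruding_tilings_def by auto

private lemma P_pairs: "\<forall>e\<in>P. \<exists>i. e = {i, Suc i}"
  and P_Union: "\<Union>P = rows m - (T \<union> U)"
  and P_disjoint: "\<forall>e\<in>P. \<forall>e'\<in>P. e \<noteq> e' \<longrightarrow> e \<inter> e' = {}"
  using P unfolding column_tilings_iff by auto

private lemma P_rows:
  assumes "{i, Suc i} \<in> P"
  shows "1 \<le> i \<and> Suc i \<le> m \<and> i \<notin> T \<and> i \<notin> U \<and> Suc i \<notin> T \<and> Suc i \<notin> U"
proof -
  have "i \<in> \<Union>P" "Suc i \<in> \<Union>P"
    using assms by auto
  then show ?thesis
    unfolding P_Union by auto
qed

private lemma M'_cells:
  assumes "e \<in> M'" "(a, b) \<in> e"
  shows "b \<le> n \<or> (b = Suc n \<and> e = hdomino a n \<and> a \<in> T)"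
proof -
  have "e \<in> grid_edges m n \<union> protrusions n T"
    using M'_edges assms(1) by auto
  then show ?thesis
    by (cases rule: grid_edges_protrusions_cases) (use assms(2) in auto)
qed

private lemma join_cases:
  assumes "e \<in> join_last_column n U M' P"
  obtains "e \<in> M'" | i where "e = vdomino i (Suc n)" "{i, Suc i} \<in> P" | i where "e = hdomino i (Suc n)" "i \<in> U"
  using assms unfolding join_last_column_def column_dominoes_def protrusions_def by auto

lemma join_last_column_edges:
  "join_last_column n U M' P \<subseteq> grid_edges m (Suc n) \<union> protrusions (Suc n) U"
proof
  fix e assume "e \<in> join_last_column n U M' P"
  then show "e \<in> grid_edges m (Suc n) \<union> protrusions (Suc n) U"
  proof (cases rule: join_cases)
    case 1
    then have "e \<in> grid_edges m n \<union> protrusions n T"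
      using M'_edges by auto
    then show ?thesis
    proof (cases rule: grid_edges_protrusions_cases)
      case (X i)
      then have "n \<noteq> 0" "i \<in> rows m"
        using M'_empty T by auto
      with X have "e \<in> grid_edges m (Suc n)"
        unfolding grid_edges_iff by (intro disjI1 exI[of _ i] exI[of _ n]) auto
      then show ?thesis
        by simp
    qed (auto simp: grid_edges_iff)
  next
    case (2 i)
    then have "e \<in> grid_edges m (Suc n)"
      using P_rows[OF 2(2)] unfolding grid_edges_iff by (intro disjI2 exI[of _ i] exI[of _ "Suc n"]) auto
    then show ?thesis
      by simp
  next
    case (3 i)
    then show ?thesis
      unfolding protrusions_def by auto
  qed
qed

lemma join_last_column_cover_first_columns:
  assumes v: "v \<in> grid_cells m n"
  shows "\<exists>!e. e \<in> join_last_column n U M' P \<and> v \<in> e"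
proof -
  obtain e where e: "e \<in> M'" "v \<in> e"
    using M'_cover v by blast
  obtain a b where ab: "v = (a, b)" "b \<le> n"
    using v by (cases v) auto
  have "e' = e" if "e' \<in> join_last_column n U M' P" "v \<in> e'" for e'
  proof -
    have "e' \<in> M'"
      using that(1) ab that(2) by (cases rule: join_cases) auto
    then show ?thesis
      using unique_cover[OF M'_cover v] e that by blast
  qed
  then show ?thesis
    using e unfolding join_last_column_def by blast
qed

private lemma last_column_crossing:
  assumes a: "a \<in> T" and e': "e' \<in> join_last_column n U M' P" "(a, Suc n) \<in> e'"
  shows "e' = hdomino a n"
  using e'(1)
proof (cases rule: join_cases)
  case 1
  then show ?thesis using M'_cells[OF 1 e'(2)] by simp
next
  case (2 i)
  then show ?thesis using P_rows[OF 2(2)] e'(2) a by auto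
next
  case (3 i)
  then show ?thesis using T(2) e'(2) a by auto
qed

private lemma last_column_protruding:
  assumes a: "a \<in> U" and e': "e' \<in> join_last_column n U M' P" "(a, Suc n) \<in> e'"
  shows "e' = hdomino a (Suc n)"
  using e'(1)
proof (cases rule: join_cases)
  case 1
  then show ?thesis using M'_cells[OF 1 e'(2)] T(2) a by auto
next
  case (2 i)
  then show ?thesis using P_rows[OF 2(2)] e'(2) a by auto
next
  case (3 i)
  then show ?thesis using e'(2) by auto
qed

private lemma last_column_vertical:
  assumes p: "{i, Suc i} \<in> P" "a \<in> {i, Suc i}"
    and e': "e' \<in> join_last_column n U M' P" "(a, Suc n) \<in> e'"
  shows "e' = vdomino i (Suc n)"
proof -
  have "a \<in> rows m - (T \<union> U)"
    unfolding P_Union[symmetric] using p by blast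
  then have aTU: "a \<notin> T" "a \<notin> U"
    by auto
  show ?thesis
    using e'(1)
  proof (cases rule: join_cases)
    case 1
    then show ?thesis using M'_cells[OF 1 e'(2)] aTU by auto
  next
    case (2 i')
    then have "a \<in> {i', Suc i'} \<inter> {i, Suc i}"
      using e'(2) p(2) by auto
    then have "{i', Suc i'} = {i, Suc i}"
      using P_disjoint[rule_format, OF 2(2) p(1)] by auto
    then show ?thesis
      using 2(1) by simp
  next
    case (3 i')
    then show ?thesis using e'(2) aTU by auto
  qed
qed

lemma join_last_column_cover_last_column:
  assumes a: "a \<in> rows m"
  shows "\<exists>!e. e \<in> join_last_column n U M' P \<and> (a, Suc n) \<in> e"
proof -
  have "a \<in> T \<or> a \<in> U \<or> a \<in> \<Union>P"
    using a unfolding P_Union by auto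
  moreover have "\<exists>i. {i, Suc i} \<in> P \<and> a \<in> {i, Suc i}" if aP: "a \<in> \<Union>P"
  proof -
    obtain p where p: "p \<in> P" "a \<in> p"
      using aP by blast
    moreover obtain i where "p = {i, Suc i}"
      using P_pairs p(1) by blast
    ultimately show ?thesis
      by auto
  qed
  ultimately consider (crossing) "a \<in> T" | (protruding) "a \<in> U"
    | (vertical) i where "{i, Suc i} \<in> P" "a \<in> {i, Suc i}"
    by blast
  then show ?thesis
  proof cases
    case crossing
    then have e: "hdomino a n \<in> join_last_column n U M' P"
      using M'_protrusions unfolding join_last_column_def protrusions_def by auto
    show ?thesis
    proof (intro ex1I[of _ "hdomino a n"] conjI)
      show "e = hdomino a n" if "e \<in> join_last_column n U M' P \<and> (a, Suc n) \<in> e" for e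
        using that last_column_crossing[OF crossing] by blast
    qed (use e in auto)
  next
    case protruding
    then have e: "hdomino a (Suc n) \<in> join_last_column n U M' P"
      unfolding join_last_column_def protrusions_def by auto
    show ?thesis
    proof (intro ex1I[of _ "hdomino a (Suc n)"] conjI)
      show "e = hdomino a (Suc n)" if "e \<in> join_last_column n U M' P \<and> (a, Suc n) \<in> e" for e
        using that last_column_protruding[OF protruding] by blast
    qed (use e in auto)
  next
    case (vertical i)
    have e: "vdomino i (Suc n) \<in> join_last_column n U M' P" "(a, Suc n) \<in> vdomino i (Suc n)"
      using vertical unfolding join_last_column_def column_dominoes_def by auto
    show ?thesis
    proof (intro ex1I[of _ "vdomino i (Suc n)"] conjI)
      show "e = vdomino i (Suc n)" if "e \<in> join_last_column n U M' P \<and> (a, Suc n) \<in> e" for e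
        using that last_column_vertical[OF vertical] by blast
    qed (use e in auto)
  qed
qed

lemma join_last_column_mem: "join_last_column n U M' P \<in> protruding_tilings m (Suc n) U"
  unfolding protruding_tilings_def
proof (intro CollectI conjI)
  show "join_last_column n U M' P \<subseteq> grid_edges m (Suc n) \<union> protrusions (Suc n) U"
    by (rule join_last_column_edges)
  show "protrusions (Suc n) U \<subseteq> join_last_column n U M' P"
    unfolding join_last_column_def by blast
  show "Suc n = 0 \<longrightarrow> U = {}"
    by simp
  show "\<forall>v\<in>grid_cells m (Suc n). \<exists>!e. e \<in> join_last_column n U M' P \<and> v \<in> e"
  proof
    fix v assume v: "v \<in> grid_cells m (Suc n)"
    obtain a b where ab: "v = (a, b)"
      by force
    show "\<exists>!e. e \<in> join_last_column n U M' P \<and> v \<in> e"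
    proof (cases "b \<le> n")
      case True
      then have "v \<in> grid_cells m n"
        using v ab by auto
      then show ?thesis
        by (rule join_last_column_cover_first_columns)
    next
      case False
      then have "b = Suc n" "a \<in> rows m"
        using v ab by auto
      then show ?thesis
        using join_last_column_cover_last_column ab by simp
    qed
  qed
qed

lemma split_join_last_column:
  "split_last_column m n (join_last_column n U M' P) = (T, M', P)"
proof -
  let ?M = "join_last_column n U M' P"
  have "hdomino i n \<in> M' \<longleftrightarrow> i \<in> T" for i
  proof
    assume "hdomino i n \<in> M'"
    then have "hdomino i n \<in> grid_edges m n \<union> protrusions n T"
      using M'_edges by auto
    then show "i \<in> T"
      by (cases rule: grid_edges_protrusions_cases) auto
  qed (use M'_protrusions in \<open>auto simp: protrusions_def\<close>)
  then have crossing: "crossing_rows m n ?M = T"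
    using T(1) unfolding crossing_rows_def join_last_column_def column_dominoes_def protrusions_def by auto
  have "column_dominoes (Suc n) P \<inter> (grid_edges m n \<union> protrusions n T) = {}"
    unfolding column_dominoes_def by (auto simp: grid_edges_iff protrusions_def)
  moreover have "protrusions (Suc n) U \<inter> (grid_edges m n \<union> protrusions n T) = {}"
    unfolding protrusions_def by (auto simp: grid_edges_iff)
  moreover have "first_columns m n ?M = ?M \<inter> (grid_edges m n \<union> protrusions n T)"
    unfolding first_columns_def crossing ..
  ultimately have first: "first_columns m n ?M = M'"
    using M'_edges unfolding join_last_column_def by blast
  have "vdomino i (Suc n) \<notin> M'" for i
  proof
    assume "vdomino i (Suc n) \<in> M'"
    then have "vdomino i (Suc n) \<in> grid_edges m n \<union> protrusions n T"
      using M'_edges by auto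
    then show False
      by (cases rule: grid_edges_protrusions_cases) auto
  qed
  then have "vdomino i (Suc n) \<in> ?M \<longleftrightarrow> {i, Suc i} \<in> P" for i
    unfolding join_last_column_def column_dominoes_def protrusions_def by auto
  then have "last_column_pairs n ?M = {{i, Suc i} | i. {i, Suc i} \<in> P}"
    unfolding last_column_pairs_def by (simp only:)
  also have "\<dots> = P"
  proof
    show "P \<subseteq> {{i, Suc i} | i. {i, Suc i} \<in> P}"
    proof
      fix e assume "e \<in> P"
      moreover obtain i where "e = {i, Suc i}"
        using P_pairs \<open>e \<in> P\<close> by blast
      ultimately show "e \<in> {{i, Suc i} | i. {i, Suc i} \<in> P}"
        by blast
    qed
  qed blast
  finally show ?thesis
    using crossing first unfolding split_last_column_def by simp
qed

end

lemma split_last_column_bij: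
  "bij_betw (split_last_column m n) (protruding_tilings m (Suc n) U) (last_column_splits m n U)"
proof (rule bij_betwI[where g = "\<lambda>(T, M', P). join_last_column n U M' P"])
  show "split_last_column m n \<in> protruding_tilings m (Suc n) U \<rightarrow> last_column_splits m n U"
    using split_last_column_mem by blast
  show "(\<lambda>(T, M', P). join_last_column n U M' P) \<in> last_column_splits m n U \<rightarrow> protruding_tilings m (Suc n) U"
    using join_last_column_mem unfolding last_column_splits_def by auto
  show "(\<lambda>(T, M', P). join_last_column n U M' P) (split_last_column m n M) = M"
    if "M \<in> protruding_tilings m (Suc n) U" for M
    using join_split_last_column[OF that] unfolding split_last_column_def by simp
  show "split_last_column m n ((\<lambda>(T, M', P). join_last_column n U M' P) z) = z"
    if "z \<in> last_column_splits m n U" for z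
    using that split_join_last_column unfolding last_column_splits_def by auto
qed

lemma card_protruding_tilings_Suc:
  "card (protruding_tilings m (Suc n) U)
    = (\<Sum>T\<in>{T. T \<subseteq> rows m \<and> T \<inter> U = {}}. card (protruding_tilings m n T) * card (column_tilings (rows m - (T \<union> U))))"
proof -
  have "card (protruding_tilings m (Suc n) U) = card (last_column_splits m n U)"
    using bij_betw_same_card[OF split_last_column_bij] .
  also have "\<dots> = (\<Sum>T\<in>{T. T \<subseteq> rows m \<and> T \<inter> U = {}}. card (protruding_tilings m n T \<times> column_tilings (rows m - (T \<union> U))))"
    unfolding last_column_splits_def
    by (rule card_SigmaI) (auto intro!: finite_protruding_tilings finite_column_tilings finite_cartesian_product intro: finite_subset)
  also have "\<dots> = (\<Sum>T\<in>{T. T \<subseteq> rows m \<and> T \<inter> U = {}}. card (protruding_tilings m n T) * card (column_tilings (rows m - (T \<union> U))))"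
    by (simp add: card_cartesian_product)
  finally show ?thesis .
qed

lemma card_protruding_tilings_eq_matpow:
  "T \<subseteq> rows m \<Longrightarrow> int (card (protruding_tilings m n T)) = matpow (Pow (rows m)) (transfer m) n {} T"
proof (induction n arbitrary: T)
  case 0
  then show ?case
    by (simp add: protruding_tilings_0 matone_def)
next
  case (Suc n U)
  let ?I = "{T. T \<subseteq> rows m \<and> T \<inter> U = {}}"
  have "int (card (protruding_tilings m (Suc n) U))
      = (\<Sum>T\<in>?I. int (card (protruding_tilings m n T)) * int (card (column_tilings (rows m - (T \<union> U)))))"
    using Suc.prems unfolding card_protruding_tilings_Suc by simp
  also have "\<dots> = (\<Sum>T\<in>?I. matpow (Pow (rows m)) (transfer m) n {} T * transfer m T U)"
    using Suc.IH unfolding transfer_def by (intro sum.cong) auto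
  also have "\<dots> = (\<Sum>T\<in>Pow (rows m). matpow (Pow (rows m)) (transfer m) n {} T * transfer m T U)"
    by (rule sum.mono_neutral_left) (auto simp: transfer_def)
  also have "\<dots> = matpow (Pow (rows m)) (transfer m) (Suc n) {} U"
    by (simp add: matmul_def)
  finally show ?case .
qed

lemma domino_T_eq_matpow: "int (domino_T m n) = matpow (Pow (rows m)) (transfer m) n {} {}"
  using card_protruding_tilings_eq_matpow[of "{}" m n]
  unfolding domino_T_def protruding_tilings_empty by simp

section \<open>The two-sided sequence\<close>

lemma eps_sign_square: "eps_sign m n * eps_sign m n = 1"
  unfolding eps_sign_def by simp

lemma eps_sign_reflect: "eps_sign m (-2 - n) = eps_sign m n"
  unfolding eps_sign_def by presburger

definition domino_ext :: "nat \<Rightarrow> int \<Rightarrow> int" where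
  "domino_ext m n = matzpow (Pow (rows m)) (transfer m) (transfer_inv m) n {} {}"

lemma domino_ext_of_nat: "domino_ext m (int n) = int (domino_T m n)"
  by (simp add: domino_ext_def domino_T_eq_matpow)

lemma domino_ext_0: "domino_ext m 0 = 1"
  by (simp add: domino_ext_def matzpow_def matone_def)

lemma domino_ext_add_of_nat:
  "domino_ext m (n + int k)
    = (\<Sum>s\<in>Pow (rows m). matzpow (Pow (rows m)) (transfer m) (transfer_inv m) n {} s
        * matpow (Pow (rows m)) (transfer m) k s {})"
proof -
  have "matmul (Pow (rows m)) (transfer_inv m) (transfer m) S U = matone S U"
    if "S \<in> Pow (rows m)" "U \<in> Pow (rows m)" for S U
    using that matmul_transfer_inv_transfer by blast
  from matzpow_add_of_nat[OF _ this, of "{}" "{}" n k] show ?thesis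
    unfolding domino_ext_def by (simp add: matmul_def)
qed

lemma domino_ext_recurrence:
  "\<exists>d b. b 0 \<noteq> 0 \<and> b d \<noteq> 0 \<and> (\<forall>n. (\<Sum>k=0..d. b k * domino_ext m (n + int k)) = 0)"
proof -
  let ?I = "Pow (rows m)"
  let ?Z = "matzpow ?I (transfer m) (transfer_inv m)" and ?A = "matpow ?I (transfer m)"
  obtain c :: "nat \<Rightarrow> int" where c: "\<exists>k\<le>card ?I. c k \<noteq> 0"
    and dependence: "\<forall>s\<in>?I. (\<Sum>k=0..card ?I. c k * ?A k s {}) = 0"
    using linear_dependence_of_functions[of ?I "\<lambda>k s. ?A k s {}"] by auto
  have "(\<Sum>k=0..card ?I. c k * domino_ext m (n + int k)) = 0" for n
  proof -
    have "(\<Sum>k=0..card ?I. c k * domino_ext m (n + int k))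
        = (\<Sum>s\<in>?I. ?Z n {} s * (\<Sum>k=0..card ?I. c k * ?A k s {}))"
      unfolding domino_ext_add_of_nat sum_distrib_left
      by (subst sum.swap) (simp add: ac_simps)
    also have "\<dots> = 0"
      using dependence by simp
    finally show ?thesis .
  qed
  with c show ?thesis
    using linear_recurrence_normalize by blast
qed

lemma domino_ext_reciprocity_of_nat:
  "domino_ext m (-2 - int k) = eps_sign m (int k) * domino_ext m (int k)"
proof -
  let ?A = "matpow (Pow (rows m)) (transfer m)"
  have "-2 - int k = - int (k + 2)"
    by simp
  then have "domino_ext m (-2 - int k) = matpow (Pow (rows m)) (transfer_inv m) (k + 2) {} {}"
    unfolding domino_ext_def by (simp only: matzpow_uminus_of_nat)
  also have "\<dots> = reciprocity_sign m (k + 2) 0 * ?A k {} {}"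
    using matpow_transfer_inv[of "{}" m "k + 2"] matpow_transfer_all_all[of m k] by simp
  also have "\<dots> = eps_sign m (int k) * ?A k {} {}"
  proof (cases "?A k {} {} = 0")
    case False
    then have "even (k * m)"
      using even_if_matpow_transfer_nonzero[of "{}" m "{}" k] by simp
    then show ?thesis
      using reciprocity_sign_eq_eps_sign by simp
  qed simp
  finally show ?thesis
    by (simp add: domino_ext_def)
qed

lemma domino_ext_reciprocity:
  assumes "m \<ge> 1"
  shows "domino_ext m (-2 - n) = eps_sign m n * domino_ext m n"
proof -
  have "n \<ge> 0 \<or> n = -1 \<or> n = -2 - int (nat (-2 - n))"
    by auto
  then consider "n \<ge> 0" | "n = -1" | k where "n = -2 - int k"
    by blast
  then show ?thesis
  proof cases
    case 1
    then show ?thesis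
      using domino_ext_reciprocity_of_nat[of m "nat n"] by simp
  next
    case 2
    have "domino_ext m (-1) = transfer_inv m {} {}"
      using matzpow_uminus_of_nat[of "Pow (rows m)" "transfer m" "transfer_inv m" 1]
      by (simp add: domino_ext_def matmul_matone_left)
    also have "\<dots> = 0"
      using assms unfolding transfer_inv_def rows_def by auto
    finally show ?thesis
      using 2 by simp
  next
    case 3
    then have "eps_sign m n * domino_ext m n = eps_sign m n * eps_sign m (int k) * domino_ext m (int k)"
      by (simp add: domino_ext_reciprocity_of_nat)
    also have "\<dots> = domino_ext m (-2 - n)"
      using 3 eps_sign_reflect[of m "int k"] eps_sign_square[of m "int k"] by simp
    finally show ?thesis ..
  qed
qed

lemma domino_ext_tail_recurrence:
  fixes b' :: "nat \<Rightarrow> complex"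
  assumes tail: "\<forall>n::nat. n \<ge> 1 \<longrightarrow> (\<Sum>k=0..d'. b' k * of_nat (domino_T m (n + k))) = 0"
  shows "(\<Sum>k=0..d'. b' k * of_int (domino_ext m (n + int k))) = 0"
proof -
  obtain d b where b0: "b 0 \<noteq> 0"
    and recurrence: "\<And>n. (\<Sum>k=0..d. b k * domino_ext m (n + int k)) = 0"
    using domino_ext_recurrence by blast
  show ?thesis
  proof (rule linear_recurrence_propagates_backwards[where b = "\<lambda>k. of_int (b k)" and N = 1])
    show "(\<Sum>k=0..d. of_int (b k) * of_int (domino_ext m (n + int k))) = (0::complex)" for n
      using arg_cong[OF recurrence, of "of_int :: int \<Rightarrow> complex"] by simp
    show "(\<Sum>k=0..d'. b' k * of_int (domino_ext m (n + int k))) = 0" if "n \<ge> 1" for n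
    proof -
      have "n = int (nat n)" "nat n \<ge> 1"
        using that by auto
      then show ?thesis
        using tail by (metis (no_types, lifting) domino_ext_of_nat of_int_of_nat_eq of_nat_add sum.cong)
    qed
  qed (use b0 in simp)
qed

theorem mainTheorem1:
  fixes m :: nat
  assumes "m \<ge> 1"
  shows "(\<exists>(d::nat) (b::nat \<Rightarrow> int). b 0 \<noteq> 0 \<and> b d \<noteq> 0 \<and>
            (\<forall>n::nat. n \<ge> 1 \<longrightarrow> (\<Sum>k=0..d. b k * int (domino_T m (n + k))) = 0))
       \<and> (\<exists>U :: int \<Rightarrow> int.
            U 0 = 1 \<and>
            (\<forall>n::nat. n \<ge> 1 \<longrightarrow> U (int n) = int (domino_T m n)) \<and>
            (\<forall>(d::nat) (b::nat \<Rightarrow> complex).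
               b 0 \<noteq> 0 \<and> b d \<noteq> 0 \<and>
               (\<forall>n::nat. n \<ge> 1 \<longrightarrow> (\<Sum>k=0..d. b k * of_nat (domino_T m (n + k))) = 0)
               \<longrightarrow> (\<forall>n::int. (\<Sum>k=0..d. b k * of_int (U (n + int k))) = 0)) \<and>
            (\<forall>n::int. U (-2 - n) = eps_sign m n * U n))"
proof -
  obtain d b where "b 0 \<noteq> 0" "b d \<noteq> 0"
    and recurrence: "\<And>n. (\<Sum>k=0..d. b k * domino_ext m (n + int k)) = 0"
    using domino_ext_recurrence by blast
  moreover have "(\<Sum>k=0..d. b k * int (domino_T m (n + k))) = 0" for n
    using recurrence[of "int n"] by (simp add: domino_ext_of_nat flip: of_nat_add)
  ultimately have "\<exists>d (b::nat \<Rightarrow> int). b 0 \<noteq> 0 \<and> b d \<noteq> 0 \<and>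
      (\<forall>n::nat. n \<ge> 1 \<longrightarrow> (\<Sum>k=0..d. b k * int (domino_T m (n + k))) = 0)"
    by blast
  then show ?thesis
    using domino_ext_0 domino_ext_of_nat domino_ext_tail_recurrence domino_ext_reciprocity[OF assms]
    by (intro conjI exI[of _ "domino_ext m"]) auto
qed

end
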